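(* Suppose that for every $c\in\{1,\dots,K-1\}$, $$\bar p_c(\bm x,\bar Y)=\binom{K-1}{c}^{-1}\sum_{y\notin \bar Y}p(\bm x,y)\qquad(\bm x\in\mathcal X,\ \bar Y\in\overline{\mathcal Y}_c),$$ and let $\pi_1,\dots,\pi_{K-1}\ge0$ with $\sum_c\pi_c=1$. Let $\bar p$ be the density on $\mathcal X\times\overline{\mathcal Y}$, $\overline{\mathcal Y}=\bigcup_{c=1}^{K-1}\overline{\mathcal Y}_c$, given by $\bar p(\bm x,\bar Y)=\pi_c\,\bar p_c(\bm x,\bar Y)$ whenever $|\bar Y|=c$, and let $\bar p(\bm x)$ be its marginal on $\mathcal X$. Put $\lambda=(K-1)/\sum_{c=1}^{K-1}c\,\pi_c$ and let $\gamma\in[0,1]$. Then for any loss $\ell$ and decision function $\bm g$ (with finite expectations), $$R(\bm g)=\mathbb E_{\bar p(\bm x,\bar Y)}\Big[\mathcal L(\bm g(\bm x))-\lambda\sum_{y\in\bar Y}\ell(\bm g(\bm x),y)\Big]$$ and $$R(\bm g)=\mathbb E_{\bar p(\bm x,\bar Y)}\Big[(1-\gamma)\mathcal L(\bm g(\bm x))-\lambda\sum_{y\in\bar Y}\ell(\bm g(\bm x),y)\Big]+\gamma\,\mathbb E_{\bar p(\bm x)}\big[\mathcal L(\bm g(\bm x))\big].$$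
   Context: Let $K\ge 2$, $\mathcal X\subseteq\mathbb R^d$ the feature space and $\mathcal Y=\{1,\dots,K\}$ the label space. Let $p(\bm x,y)$ be a joint density on $\mathcal X\times\mathcal Y$ with marginal density $p(\bm x)$. For $c\in\{1,\dots,K-1\}$, $\overline{\mathcal Y}_c$ denotes the collection of all $c$-element subsets of $\{1,\dots,K\}$, and $\bar p_c(\bm x,\bar Y)$ is a density on $\mathcal X\times\overline{\mathcal Y}_c$. A decision function is a map $\bm g:\mathcal X\to\mathbb R^K$, a loss is a function $\ell:\mathbb R^K\times\mathcal Y\to[0,\infty)$, the classification risk is $R(\bm g)=\mathbb E_{p(\bm x,y)}[\ell(\bm g(\bm x),y)]$, and the cumulative loss is $\mathcal L(\bm g(\bm x))=\sum_{y=1}^K\ell(\bm g(\bm x),y)$. *)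

theory Defs
  imports "HOL-Analysis.Analysis"
begin

text \<open>Labels form a finite type 'k with K = CARD('k); features live in X \<subseteq> real^'d;
 densities are w.r.t. Lebesgue measure restricted to X.\<close>

definition Ybar_c :: "nat \<Rightarrow> 'k::finite set set" where
  "Ybar_c c = {Y. card Y = c}"

definition Ybar :: "'k::finite set set" where
  "Ybar = (\<Union>c\<in>{1..CARD('k) - 1}. Ybar_c c)"

definition cum_loss :: "(real^'k \<Rightarrow> 'k::finite \<Rightarrow> real) \<Rightarrow> real^'k \<Rightarrow> real" where
  "cum_loss loss v = (\<Sum>y\<in>UNIV. loss v y)"

definition risk :: "(real^'d) set \<Rightarrow> (real^'d \<Rightarrow> 'k::finite \<Rightarrow> real) \<Rightarrow>
    (real^'k \<Rightarrow> 'k \<Rightarrow> real) \<Rightarrow> (real^'d \<Rightarrow> real^'k) \<Rightarrow> real" where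
  "risk X p loss g = (\<Sum>y\<in>UNIV. (LINT x:X|lborel. loss (g x) y * p x y))"

definition pbar :: "(nat \<Rightarrow> real) \<Rightarrow> (nat \<Rightarrow> real^'d \<Rightarrow> 'k::finite set \<Rightarrow> real) \<Rightarrow>
    real^'d \<Rightarrow> 'k set \<Rightarrow> real" where
  "pbar \<pi> pc x Y = \<pi> (card Y) * pc (card Y) x Y"

definition pbar_marg :: "(nat \<Rightarrow> real) \<Rightarrow> (nat \<Rightarrow> real^'d \<Rightarrow> 'k::finite set \<Rightarrow> real) \<Rightarrow>
    real^'d \<Rightarrow> real" where
  "pbar_marg \<pi> pc x = (\<Sum>Y\<in>(Ybar::'k set set). pbar \<pi> pc x Y)"

definition exp_bar :: "(real^'d) set \<Rightarrow> (real^'d \<Rightarrow> 'k::finite set \<Rightarrow> real) \<Rightarrow>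
    (real^'d \<Rightarrow> 'k set \<Rightarrow> real) \<Rightarrow> real" where
  "exp_bar X q f = (\<Sum>Y\<in>(Ybar::'k set set). (LINT x:X|lborel. f x Y * q x Y))"

definition exp_marg :: "(real^'d) set \<Rightarrow> (real^'d \<Rightarrow> real) \<Rightarrow> (real^'d \<Rightarrow> real) \<Rightarrow> real" where
  "exp_marg X q h = (LINT x:X|lborel. h x * q x)"

end

theory Submission
  imports Defs
begin

text \<open>For a fixed feature x everything is double counting over the c-subsets Y of the K labels:
  \<open>(K-1 choose c)\<close> of them avoid a given label y, and \<open>(K-2 choose c-1)\<close> avoid y while
  containing a given \<open>y' \<noteq> y\<close>. Hence, under the mixture density, the total mass of all Y is
  the sum of \<open>p(x,y)\<close> over y, while the mass weighted by the loss on Y is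
  \<open>(\<Sum>c. c \<pi> c) / (K-1)\<close> times the sum of \<open>p(x,y) l(y')\<close> over \<open>y' \<noteq> y\<close>; \<open>\<lambda>\<close> is exactly the
  inverse of that factor. So the integrand \<open>\<alpha> \<cdot> cum_loss - \<lambda> \<cdot> (loss on Y)\<close> has pointwise mean
  \<open>(\<alpha> - 1) \<cdot> cum_loss \<cdot> p(x) + (loss weighted by p(x,\<cdot>))\<close>. All integrands are finite combinations
  of \<open>l(g x, y') p(x, y)\<close>, so integration over X is linear, and \<open>\<alpha> = 1\<close>, \<open>\<alpha> = 1 - \<gamma>\<close> give the
  two identities.\<close>

text \<open>The density \<open>pbar(x, \<cdot>)\<close> at a point of X, with \<open>w = p(x, \<cdot>)\<close>.\<close>

definition compl_mixture :: "(nat \<Rightarrow> real) \<Rightarrow> ('k::finite \<Rightarrow> real) \<Rightarrow> 'k set \<Rightarrow> real" where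
  "compl_mixture \<pi> w Y = \<pi> (card Y) / real ((CARD('k) - 1) choose card Y) * (\<Sum>y\<in>UNIV - Y. w y)"

lemma sum_Ybar_by_card:
  "(\<Sum>Y\<in>(Ybar::'k::finite set set). F Y) = (\<Sum>c=1..CARD('k) - 1. \<Sum>Y\<in>Ybar_c c. F Y)"
  unfolding Ybar_def by (rule sum.UNION_disjoint) (auto simp: Ybar_c_def)

lemma card_Ybar_c_avoiding:
  fixes y :: "'k::finite"
  shows "card {Y\<in>Ybar_c c. y \<notin> Y} = (CARD('k) - 1) choose c"
proof -
  have "{Y\<in>Ybar_c c. y \<notin> Y} = {Y. Y \<subseteq> UNIV - {y} \<and> card Y = c}"
    by (auto simp: Ybar_c_def)
  then show ?thesis
    using n_subsets[of "UNIV - {y}" c] by simp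
qed

lemma card_Ybar_c_containing_avoiding:
  fixes y y' :: "'k::finite"
  assumes "y' \<noteq> y" "c \<ge> 1"
  shows "card {Y\<in>Ybar_c c. y \<notin> Y \<and> y' \<in> Y} = (CARD('k) - 2) choose (c - 1)"
proof -
  let ?Z = "{Z. Z \<subseteq> UNIV - {y, y'} \<and> card Z = c - 1}"
  have "{Y\<in>Ybar_c c. y \<notin> Y \<and> y' \<in> Y} = insert y' ` ?Z"
  proof (intro equalityI subsetI)
    fix Y assume "Y \<in> {Y\<in>Ybar_c c. y \<notin> Y \<and> y' \<in> Y}"
    then have "Y = insert y' (Y - {y'})" "Y - {y'} \<in> ?Z"
      using assms by (auto simp: Ybar_c_def)
    then show "Y \<in> insert y' ` ?Z" by blast
  next
    fix Y assume "Y \<in> insert y' ` ?Z"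
    then obtain Z where "Z \<in> ?Z" "Y = insert y' Z" by blast
    then show "Y \<in> {Y\<in>Ybar_c c. y \<notin> Y \<and> y' \<in> Y}"
      using assms by (auto simp: Ybar_c_def card_insert_if)
  qed
  moreover have "inj_on (insert y') ?Z"
    by (rule inj_onI) (metis Diff_insert_absorb mem_Collect_eq subset_Diff_insert)
  moreover have "card (UNIV - {y, y'}) = CARD('k) - 2"
    using assms by (simp add: card_Diff_subset)
  ultimately show ?thesis
    using n_subsets[of "UNIV - {y, y'}" "c - 1"] by (simp add: card_image)
qed

lemma sum_as_sum_UNIV:
  "(\<Sum>y\<in>A. f y) = (\<Sum>y\<in>(UNIV::'k::finite set). if y \<in> A then f y else (0::real))"
  using sum.inter_restrict[of UNIV f A] by simp

lemma sum_Ybar_c_complement: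
  fixes w :: "'k::finite \<Rightarrow> real"
  shows "(\<Sum>Y\<in>Ybar_c c. \<Sum>y\<in>UNIV - Y. w y) = real ((CARD('k) - 1) choose c) * sum w UNIV"
proof -
  have "(\<Sum>Y\<in>Ybar_c c. \<Sum>y\<in>UNIV - Y. w y) = (\<Sum>y\<in>UNIV. \<Sum>Y\<in>Ybar_c c. if y \<notin> Y then w y else 0)"
    by (subst sum.swap) (simp add: sum_as_sum_UNIV[where A="UNIV - _"])
  also have "\<dots> = (\<Sum>y\<in>UNIV. w y * real (card {Y\<in>Ybar_c c. y \<notin> Y}))"
    by (simp add: sum.inter_filter[symmetric] Ybar_c_def mult.commute)
  finally show ?thesis
    by (simp add: card_Ybar_c_avoiding sum_distrib_right mult.commute)
qed

lemma sum_Ybar_c_complement_times_inside: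
  fixes w l :: "'k::finite \<Rightarrow> real"
  assumes "c \<ge> 1"
  shows "(\<Sum>Y\<in>Ybar_c c. (\<Sum>y\<in>UNIV - Y. w y) * (\<Sum>y'\<in>Y. l y'))
    = real ((CARD('k) - 2) choose (c - 1)) * (sum w UNIV * sum l UNIV - (\<Sum>y\<in>UNIV. w y * l y))"
proof -
  let ?B = "real ((CARD('k) - 2) choose (c - 1))"
  have split: "(\<Sum>y\<in>UNIV - Y. w y) * (\<Sum>y'\<in>Y. l y')
      = (\<Sum>y\<in>UNIV. \<Sum>y'\<in>UNIV. if y \<notin> Y \<and> y' \<in> Y then w y * l y' else 0)" for Y
    unfolding sum_product
    by (subst sum_as_sum_UNIV[where A="UNIV - Y"], subst sum_as_sum_UNIV[where A=Y]) (auto intro: sum.cong)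
  have "(\<Sum>Y\<in>Ybar_c c. (\<Sum>y\<in>UNIV - Y. w y) * (\<Sum>y'\<in>Y. l y'))
      = (\<Sum>y\<in>UNIV. \<Sum>y'\<in>UNIV. \<Sum>Y\<in>Ybar_c c. if y \<notin> Y \<and> y' \<in> Y then w y * l y' else 0)"
    unfolding split by (subst sum.swap) (simp add: sum.swap[where A="Ybar_c c"])
  also have "\<dots> = (\<Sum>y\<in>UNIV. \<Sum>y'\<in>UNIV. w y * l y' * real (card {Y\<in>Ybar_c c. y \<notin> Y \<and> y' \<in> Y}))"
    by (simp add: sum.inter_filter[symmetric] Ybar_c_def mult.commute)
  also have "\<dots> = (\<Sum>y\<in>UNIV. \<Sum>y'\<in>UNIV - {y}. ?B * (w y * l y'))"
  proof (rule sum.cong[OF refl])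
    fix y :: 'k
    have "{Y\<in>Ybar_c c. y \<notin> Y \<and> y \<in> Y} = {}" by blast
    then show "(\<Sum>y'\<in>UNIV. w y * l y' * real (card {Y\<in>Ybar_c c. y \<notin> Y \<and> y' \<in> Y}))
        = (\<Sum>y'\<in>UNIV - {y}. ?B * (w y * l y'))"
      using card_Ybar_c_containing_avoiding[OF _ assms, of _ y]
      by (simp add: sum.remove[of UNIV y] mult.commute)
  qed
  also have "\<dots> = ?B * (sum w UNIV * sum l UNIV - (\<Sum>y\<in>UNIV. w y * l y))"
    by (simp add: sum_diff1 sum_distrib_left[symmetric] sum_subtractf right_diff_distrib
        sum_distrib_right[symmetric])
  finally show ?thesis .
qed

lemma binomial_pred_div_binomial:
  assumes "1 \<le> k" "k \<le> n"
  shows "real ((n - 1) choose (k - 1)) / real (n choose k) = real k / real n"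
proof -
  have "real k * real (n choose k) = real n * real ((n - 1) choose (k - 1))"
    using times_binomial_minus1_eq[of k n] assms by (simp flip: of_nat_mult)
  moreover have "n choose k > 0" "n > 0" using assms by simp_all
  ultimately show ?thesis by (simp add: field_simps)
qed

lemma sum_compl_mixture:
  fixes w :: "'k::finite \<Rightarrow> real"
  shows "(\<Sum>Y\<in>Ybar. compl_mixture \<pi> w Y) = (\<Sum>c=1..CARD('k) - 1. \<pi> c) * sum w UNIV"
  unfolding sum_Ybar_by_card sum_distrib_right
proof (rule sum.cong[OF refl])
  fix c assume "c \<in> {1..CARD('k) - 1}"
  have "(\<Sum>Y\<in>Ybar_c c. compl_mixture \<pi> w Y)
      = \<pi> c / real ((CARD('k) - 1) choose c) * (\<Sum>Y\<in>Ybar_c c. \<Sum>y\<in>UNIV - Y. w y)"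
    by (simp add: compl_mixture_def Ybar_c_def sum_distrib_left)
  also have "\<dots> = \<pi> c * sum w UNIV"
    using \<open>c \<in> {1..CARD('k) - 1}\<close> by (simp add: sum_Ybar_c_complement)
  finally show "(\<Sum>Y\<in>Ybar_c c. compl_mixture \<pi> w Y) = \<pi> c * sum w UNIV" .
qed

lemma sum_compl_mixture_times_inside:
  fixes w l :: "'k::finite \<Rightarrow> real"
  shows "(\<Sum>Y\<in>Ybar. compl_mixture \<pi> w Y * (\<Sum>y\<in>Y. l y))
    = (\<Sum>c=1..CARD('k) - 1. real c * \<pi> c) / real (CARD('k) - 1)
      * (sum w UNIV * sum l UNIV - (\<Sum>y\<in>UNIV. w y * l y))"
proof -
  let ?D = "sum w UNIV * sum l UNIV - (\<Sum>y\<in>UNIV. w y * l y)"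
  have "(\<Sum>Y\<in>Ybar_c c. compl_mixture \<pi> w Y * (\<Sum>y\<in>Y. l y)) = real c * \<pi> c / real (CARD('k) - 1) * ?D"
    if c: "c \<in> {1..CARD('k) - 1}" for c
  proof -
    have "(\<Sum>Y\<in>Ybar_c c. compl_mixture \<pi> w Y * (\<Sum>y\<in>Y. l y))
        = \<pi> c / real ((CARD('k) - 1) choose c) * (\<Sum>Y\<in>Ybar_c c. (\<Sum>y\<in>UNIV - Y. w y) * (\<Sum>y\<in>Y. l y))"
      unfolding sum_distrib_left[of "\<pi> c / _"]
      by (rule sum.cong) (simp_all add: compl_mixture_def Ybar_c_def)
    also have "\<dots> = \<pi> c * (real ((CARD('k) - 1 - 1) choose (c - 1)) / real ((CARD('k) - 1) choose c)) * ?D"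
      using c by (simp add: sum_Ybar_c_complement_times_inside numeral_2_eq_2)
    also have "\<dots> = real c * \<pi> c / real (CARD('k) - 1) * ?D"
      using c by (subst binomial_pred_div_binomial) auto
    finally show ?thesis .
  qed
  then show ?thesis
    unfolding sum_Ybar_by_card sum_divide_distrib sum_distrib_right by (rule sum.cong[OF refl])
qed

lemma sum_compl_mixture_unbiased:
  fixes w l :: "'k::finite \<Rightarrow> real"
  assumes pi_nonneg: "\<And>c. c \<in> {1..CARD('k) - 1} \<Longrightarrow> \<pi> c \<ge> 0"
    and pi_sum: "(\<Sum>c=1..CARD('k) - 1. \<pi> c) = 1"
  defines "lam \<equiv> real (CARD('k) - 1) / (\<Sum>c=1..CARD('k) - 1. real c * \<pi> c)"
  shows "(\<Sum>Y\<in>Ybar. (\<alpha> * sum l UNIV - lam * (\<Sum>y\<in>Y. l y)) * compl_mixture \<pi> w Y)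
    = (\<alpha> - 1) * (sum w UNIV * sum l UNIV) + (\<Sum>y\<in>UNIV. w y * l y)"
proof -
  let ?S = "\<Sum>c=1..CARD('k) - 1. real c * \<pi> c"
  have "(\<Sum>c=1..CARD('k) - 1. \<pi> c) \<le> ?S"
  proof (rule sum_mono)
    fix c assume "c \<in> {1..CARD('k) - 1}"
    then show "\<pi> c \<le> real c * \<pi> c"
      using pi_nonneg[of c] mult_right_mono[of 1 "real c" "\<pi> c"] by simp
  qed
  with pi_sum have "?S \<noteq> 0" by linarith
  moreover have "CARD('k) - 1 \<noteq> 0"
    using pi_sum by (intro notI) simp
  ultimately have lam_S: "lam * (?S / real (CARD('k) - 1)) = 1"
    by (simp add: lam_def)
  have "(\<Sum>Y\<in>Ybar. (\<alpha> * sum l UNIV - lam * (\<Sum>y\<in>Y. l y)) * compl_mixture \<pi> w Y)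
      = \<alpha> * sum l UNIV * (\<Sum>Y\<in>Ybar. compl_mixture \<pi> w Y)
        - lam * (\<Sum>Y\<in>Ybar. compl_mixture \<pi> w Y * (\<Sum>y\<in>Y. l y))"
    unfolding sum_distrib_left[of "\<alpha> * sum l UNIV"] sum_distrib_left[of lam]
      left_diff_distrib sum_subtractf by (simp add: sum_distrib_left sum_distrib_right mult_ac)
  also have "\<dots> = \<alpha> * (sum w UNIV * sum l UNIV)
      - lam * (?S / real (CARD('k) - 1)) * (sum w UNIV * sum l UNIV - (\<Sum>y\<in>UNIV. w y * l y))"
    unfolding sum_compl_mixture sum_compl_mixture_times_inside pi_sum by (simp add: mult_ac)
  also have "\<dots> = (\<alpha> - 1) * (sum w UNIV * sum l UNIV) + (\<Sum>y\<in>UNIV. w y * l y)"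
    unfolding lam_S by (simp add: algebra_simps)
  finally show ?thesis .
qed

lemma set_integral_sum:
  fixes f :: "'i \<Rightarrow> 'a \<Rightarrow> real"
  assumes "\<And>i. i \<in> I \<Longrightarrow> set_integrable M A (f i)"
  shows "set_integrable M A (\<lambda>x. \<Sum>i\<in>I. f i x)"
    and "(LINT x:A|M. (\<Sum>i\<in>I. f i x)) = (\<Sum>i\<in>I. LINT x:A|M. f i x)"
  using assms unfolding set_integrable_def set_lebesgue_integral_def
  by (simp_all add: sum_distrib_left integral_sum)

lemma set_integrable_sum_times_sum:
  fixes u v :: "'a \<Rightarrow> 'k \<Rightarrow> real"
  assumes "\<And>i j. set_integrable M A (\<lambda>x. u x i * v x j)"
  shows "set_integrable M A (\<lambda>x. (\<Sum>i\<in>I. u x i) * (\<Sum>j\<in>J. v x j))"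
  unfolding sum_product by (intro set_integral_sum(1) assms)

lemma exp_bar_affine_cum_loss:
  fixes X :: "(real^'d) set"
    and p :: "real^'d \<Rightarrow> 'k::finite \<Rightarrow> real"
    and pc :: "nat \<Rightarrow> real^'d \<Rightarrow> 'k set \<Rightarrow> real"
    and loss :: "real^'k \<Rightarrow> 'k \<Rightarrow> real"
    and g :: "real^'d \<Rightarrow> real^'k"
  assumes X_meas: "X \<in> sets lborel"
    and pc_def: "\<And>c x Y. c \<in> {1..CARD('k) - 1} \<Longrightarrow> x \<in> X \<Longrightarrow> Y \<in> Ybar_c c \<Longrightarrow>
        pc c x Y = (\<Sum>y\<in>UNIV - Y. p x y) / real (CARD('k) - 1 choose c)"
    and pi_nonneg: "\<And>c. c \<in> {1..CARD('k) - 1} \<Longrightarrow> \<pi> c \<ge> 0"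
    and pi_sum: "(\<Sum>c=1..CARD('k) - 1. \<pi> c) = 1"
    and finite_exp: "\<And>y y'. set_integrable lborel X (\<lambda>x. loss (g x) y' * p x y)"
  defines "lam \<equiv> real (CARD('k) - 1) / (\<Sum>c=1..CARD('k) - 1. real c * \<pi> c)"
  shows "exp_bar X (pbar \<pi> pc) (\<lambda>x Y. \<alpha> * cum_loss loss (g x) - lam * (\<Sum>y\<in>Y. loss (g x) y))
    = (\<alpha> - 1) * exp_marg X (pbar_marg \<pi> pc) (\<lambda>x. cum_loss loss (g x)) + risk X p loss g"
proof -
  let ?L = "\<lambda>x. sum (loss (g x)) UNIV"
  let ?F = "\<lambda>x Y. (\<alpha> * ?L x - lam * (\<Sum>y\<in>Y. loss (g x) y)) * compl_mixture \<pi> (p x) Y"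
  have pbar_X: "pbar \<pi> pc x Y = compl_mixture \<pi> (p x) Y" if "x \<in> X" "Y \<in> Ybar" for x Y
    using that pc_def[of "card Y" x Y]
    by (auto simp: pbar_def compl_mixture_def Ybar_def Ybar_c_def)
  have marg_X: "pbar_marg \<pi> pc x = sum (p x) UNIV" if "x \<in> X" for x
    using that pi_sum by (simp add: pbar_marg_def pbar_X sum_compl_mixture)
  have loss_times_p: "set_integrable lborel X (\<lambda>x. (\<Sum>y'\<in>B. loss (g x) y') * (\<Sum>y\<in>C. p x y))"
    for B C :: "'k set"
    using finite_exp by (rule set_integrable_sum_times_sum)
  have F_int: "set_integrable lborel X (\<lambda>x. ?F x Y)" for Y
  proof -
    have "?F x Y = \<pi> (card Y) / real ((CARD('k) - 1) choose card Y)
        * (\<alpha> * (?L x * (\<Sum>y\<in>UNIV - Y. p x y)) - lam * ((\<Sum>y'\<in>Y. loss (g x) y') * (\<Sum>y\<in>UNIV - Y. p x y)))"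
      for x
      unfolding compl_mixture_def by (simp add: divide_inverse algebra_simps)
    then show ?thesis
      using loss_times_p by simp
  qed
  have "exp_bar X (pbar \<pi> pc) (\<lambda>x Y. \<alpha> * cum_loss loss (g x) - lam * (\<Sum>y\<in>Y. loss (g x) y))
      = (\<Sum>Y\<in>Ybar. LINT x:X|lborel. ?F x Y)"
    unfolding exp_bar_def cum_loss_def
    by (intro sum.cong refl set_lebesgue_integral_cong X_meas) (simp add: pbar_X)
  also have "\<dots> = (LINT x:X|lborel. \<Sum>Y\<in>Ybar. ?F x Y)"
    using F_int by (simp add: set_integral_sum(2))
  also have "\<dots> = (LINT x:X|lborel. (\<alpha> - 1) * (?L x * sum (p x) UNIV)
      + (\<Sum>y\<in>UNIV. loss (g x) y * p x y))"
    using sum_compl_mixture_unbiased[OF pi_nonneg pi_sum, folded lam_def]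
    by (intro set_lebesgue_integral_cong X_meas) (simp add: mult_ac)
  also have "\<dots> = (\<alpha> - 1) * (LINT x:X|lborel. ?L x * sum (p x) UNIV)
      + (\<Sum>y\<in>UNIV. LINT x:X|lborel. loss (g x) y * p x y)"
    using loss_times_p finite_exp by (simp add: set_integral_sum)
  also have "\<dots> = (\<alpha> - 1) * exp_marg X (pbar_marg \<pi> pc) (\<lambda>x. cum_loss loss (g x)) + risk X p loss g"
    unfolding exp_marg_def risk_def cum_loss_def
    by (simp add: set_lebesgue_integral_cong[OF X_meas] marg_X)
  finally show ?thesis .
qed

theorem theorem5:
  fixes X :: "(real^'d) set"
    and p :: "real^'d \<Rightarrow> 'k::finite \<Rightarrow> real"
    and pc :: "nat \<Rightarrow> real^'d \<Rightarrow> 'k set \<Rightarrow> real"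
    and \<pi> :: "nat \<Rightarrow> real"
    and loss :: "real^'k \<Rightarrow> 'k \<Rightarrow> real"
    and g :: "real^'d \<Rightarrow> real^'k"
    and \<gamma> :: real
  assumes K2: "CARD('k) \<ge> 2"
    and X_meas: "X \<in> sets lborel"
    and p_meas: "\<And>y. (\<lambda>x. p x y) \<in> borel_measurable lborel"
    and p_nonneg: "\<And>x y. x \<in> X \<Longrightarrow> p x y \<ge> 0"
    and p_total: "(\<Sum>y\<in>UNIV. (LINT x:X|lborel. p x y)) = 1"
    and p_int: "\<And>y. set_integrable lborel X (\<lambda>x. p x y)"
    and pc_def: "\<And>c x Y. c \<in> {1..CARD('k) - 1} \<Longrightarrow> x \<in> X \<Longrightarrow> Y \<in> Ybar_c c \<Longrightarrow>
        pc c x Y = (\<Sum>y\<in>UNIV - Y. p x y) / real (CARD('k) - 1 choose c)"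
    and pi_nonneg: "\<And>c. c \<in> {1..CARD('k) - 1} \<Longrightarrow> \<pi> c \<ge> 0"
    and pi_sum: "(\<Sum>c=1..CARD('k) - 1. \<pi> c) = 1"
    and loss_nonneg: "\<And>v y. loss v y \<ge> 0"
    and finite_exp: "\<And>y y'. set_integrable lborel X (\<lambda>x. loss (g x) y' * p x y)"
    and gamma: "0 \<le> \<gamma>" "\<gamma> \<le> 1"
  shows "let lam = real (CARD('k) - 1) / (\<Sum>c=1..CARD('k) - 1. real c * \<pi> c) in
      risk X p loss g = exp_bar X (pbar \<pi> pc)
          (\<lambda>x Y. cum_loss loss (g x) - lam * (\<Sum>y\<in>Y. loss (g x) y))
    \<and> risk X p loss g = exp_bar X (pbar \<pi> pc)
          (\<lambda>x Y. (1 - \<gamma>) * cum_loss loss (g x) - lam * (\<Sum>y\<in>Y. loss (g x) y))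
        + \<gamma> * exp_marg X (pbar_marg \<pi> pc) (\<lambda>x. cum_loss loss (g x))"
proof -
  define lam where "lam = real (CARD('k) - 1) / (\<Sum>c=1..CARD('k) - 1. real c * \<pi> c)"
  note affine = exp_bar_affine_cum_loss[OF X_meas pc_def pi_nonneg pi_sum finite_exp, folded lam_def]
  have "risk X p loss g = exp_bar X (pbar \<pi> pc)
      (\<lambda>x Y. cum_loss loss (g x) - lam * (\<Sum>y\<in>Y. loss (g x) y))"
    using affine[of 1] by simp
  moreover have "risk X p loss g = exp_bar X (pbar \<pi> pc)
        (\<lambda>x Y. (1 - \<gamma>) * cum_loss loss (g x) - lam * (\<Sum>y\<in>Y. loss (g x) y))
      + \<gamma> * exp_marg X (pbar_marg \<pi> pc) (\<lambda>x. cum_loss loss (g x))"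
    using affine[of "1 - \<gamma>"] by simp
  ultimately show ?thesis
    unfolding lam_def Let_def by blast
qed

end
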